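(* Let $\mathfrak g$ be a Lie algebra, $(\mathfrak k,\pi)$ a $\mathfrak g$-Lie algebra (write $\xi\cdot x=\pi(\xi)x$), $r_\pm:\mathfrak k\to\mathfrak g$ linear maps, $\lambda,\nu,\kappa,\mu\in\mathbb R$, and put $r=(r_++r_-)/2$, $\beta=(r_+-r_-)/2$. (i) If $r$ is an extended $\mathcal O$-operator of weight $\lambda$ with extension $\beta$ of mass $(\nu,\kappa,\mu)$ with $\nu\neq0$, then $[x,y]_R:=r_+(x)\cdot y-r_-(y)\cdot x+\lambda[x,y]_{\mathfrak k}$ defines a Lie bracket on $\mathfrak k$. (ii) Suppose $\beta(\xi\cdot x)=[\xi,\beta(x)]_{\mathfrak g}$ for all $\xi\in\mathfrak g$, $x\in\mathfrak k$, and set $[x,y]'_R:=r(x)\cdot y-r(y)\cdot x+\lambda[x,y]_{\mathfrak k}$. Then, for each choice of sign, $r$ and $\beta$ satisfy $[r(x),r(y)]_{\mathfrak g}-r(r(x)\cdot y-r(y)\cdot x+\lambda[x,y]_{\mathfrak k})=-[\beta(x),\beta(y)]_{\mathfrak g}\pm\lambda\beta([x,y]_{\mathfrak k})$ for all $x,y$ if and only if $[r_\pm(x),r_\pm(y)]_{\mathfrak g}=r_\pm([x,y]'_R)$ for all $x,y\in\mathfrak k$.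
   Context: All spaces are finite-dimensional real. For a Lie algebra $\mathfrak g$, a $\mathfrak g$-Lie algebra $(\mathfrak k,\pi)$ is a Lie algebra $(\mathfrak k,[\,,\,]_{\mathfrak k})$ with a Lie algebra homomorphism $\pi:\mathfrak g\to\mathrm{Der}(\mathfrak k)$. For constants $\nu,\kappa,\mu$, a linear map $\beta:\mathfrak k\to\mathfrak g$ is: antisymmetric of mass $\nu$ if $\nu(\beta(x)\cdot y+\beta(y)\cdot x)=0$ for all $x,y\in\mathfrak k$; $\mathfrak g$-invariant of mass $\kappa$ if $\kappa\beta(\xi\cdot x)=\kappa[\xi,\beta(x)]_{\mathfrak g}$ for all $\xi\in\mathfrak g,x\in\mathfrak k$; equivalent of mass $\mu$ if $\mu\beta([x,y]_{\mathfrak k})\cdot z=\mu[\beta(x)\cdot y,z]_{\mathfrak k}$ for all $x,y,z\in\mathfrak k$. If $\beta$ has these three properties, a linear map $r:\mathfrak k\to\mathfrak g$ is an extended $\mathcal O$-operator of weight $\lambda$ with extension $\beta$ of mass $(\nu,\kappa,\mu)$ if $[r(x),r(y)]_{\mathfrak g}-r(r(x)\cdot y-r(y)\cdot x+\lambda[x,y]_{\mathfrak k})=\kappa[\beta(x),\beta(y)]_{\mathfrak g}+\mu\beta([x,y]_{\mathfrak k})$ for all $x,y\in\mathfrak k$. *)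

theory Defs
  imports "HOL-Analysis.Analysis"
begin

text \<open>Finite-dimensional real vector spaces are modelled by types of class euclidean_space.
  A Lie bracket on such a space: bilinear, alternating, Jacobi identity.\<close>

definition lie_bracket :: "('a::real_vector \<Rightarrow> 'a \<Rightarrow> 'a) \<Rightarrow> bool" where
  "lie_bracket br \<longleftrightarrow> bilinear br \<and> (\<forall>x. br x x = 0) \<and>
     (\<forall>x y z. br x (br y z) + br y (br z x) + br z (br x y) = 0)"

definition derivation :: "('a::real_vector \<Rightarrow> 'a \<Rightarrow> 'a) \<Rightarrow> ('a \<Rightarrow> 'a) \<Rightarrow> bool" where
  "derivation br D \<longleftrightarrow> linear D \<and> (\<forall>x y. D (br x y) = br (D x) y + br x (D y))"

definition g_lie_algebra ::
  "('g::real_vector \<Rightarrow> 'g \<Rightarrow> 'g) \<Rightarrow> ('k::real_vector \<Rightarrow> 'k \<Rightarrow> 'k) \<Rightarrow> ('g \<Rightarrow> 'k \<Rightarrow> 'k) \<Rightarrow> bool" where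
  "g_lie_algebra gbr kbr \<pi> \<longleftrightarrow> lie_bracket kbr \<and> (\<forall>x. linear (\<lambda>\<xi>. \<pi> \<xi> x)) \<and> (\<forall>\<xi>. derivation kbr (\<pi> \<xi>)) \<and>
     (\<forall>\<xi> \<eta> x. \<pi> (gbr \<xi> \<eta>) x = \<pi> \<xi> (\<pi> \<eta> x) - \<pi> \<eta> (\<pi> \<xi> x))"

definition antisym_mass ::
  "('g \<Rightarrow> 'k::real_vector \<Rightarrow> 'k) \<Rightarrow> ('k \<Rightarrow> 'g) \<Rightarrow> real \<Rightarrow> bool" where
  "antisym_mass \<pi> \<beta> \<nu> \<longleftrightarrow> (\<forall>x y. \<nu> *\<^sub>R (\<pi> (\<beta> x) y + \<pi> (\<beta> y) x) = 0)"

definition invariant_mass ::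
  "('g::real_vector \<Rightarrow> 'g \<Rightarrow> 'g) \<Rightarrow> ('g \<Rightarrow> 'k \<Rightarrow> 'k) \<Rightarrow> ('k \<Rightarrow> 'g) \<Rightarrow> real \<Rightarrow> bool" where
  "invariant_mass gbr \<pi> \<beta> \<kappa> \<longleftrightarrow> (\<forall>\<xi> x. \<kappa> *\<^sub>R \<beta> (\<pi> \<xi> x) = \<kappa> *\<^sub>R gbr \<xi> (\<beta> x))"

definition equiv_mass ::
  "('k::real_vector \<Rightarrow> 'k \<Rightarrow> 'k) \<Rightarrow> ('g \<Rightarrow> 'k \<Rightarrow> 'k) \<Rightarrow> ('k \<Rightarrow> 'g) \<Rightarrow> real \<Rightarrow> bool" where
  "equiv_mass kbr \<pi> \<beta> \<mu> \<longleftrightarrow>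
     (\<forall>x y z. \<mu> *\<^sub>R \<pi> (\<beta> (kbr x y)) z = \<mu> *\<^sub>R kbr (\<pi> (\<beta> x) y) z)"

definition ext_O_operator ::
  "('g::real_vector \<Rightarrow> 'g \<Rightarrow> 'g) \<Rightarrow> ('k::real_vector \<Rightarrow> 'k \<Rightarrow> 'k) \<Rightarrow> ('g \<Rightarrow> 'k \<Rightarrow> 'k) \<Rightarrow>
   real \<Rightarrow> ('k \<Rightarrow> 'g) \<Rightarrow> ('k \<Rightarrow> 'g) \<Rightarrow> real \<Rightarrow> real \<Rightarrow> real \<Rightarrow> bool" where
  "ext_O_operator gbr kbr \<pi> lam r \<beta> \<nu> \<kappa> \<mu> \<longleftrightarrow>
     linear r \<and> linear \<beta> \<and>
     antisym_mass \<pi> \<beta> \<nu> \<and> invariant_mass gbr \<pi> \<beta> \<kappa> \<and> equiv_mass kbr \<pi> \<beta> \<mu> \<and>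
     (\<forall>x y. gbr (r x) (r y) - r (\<pi> (r x) y - \<pi> (r y) x + lam *\<^sub>R kbr x y)
            = \<kappa> *\<^sub>R gbr (\<beta> x) (\<beta> y) + \<mu> *\<^sub>R \<beta> (kbr x y))"

end

theory Submission
  imports Defs
begin

(* Write [x,y]_r = r(x).y - r(y).x + lam [x,y] for the bracket induced on k by a linear
   map r : k -> g (rota_bracket below).  Part (i) rests on a general identity: for any r,
   the Jacobiator of [,]_r equals minus the cyclic sum of Phi(x,y).z, where
   Phi(x,y) = [r x, r y] - r [x,y]_r is the curvature of r.  For an extended O-operator
   Phi(x,y) = kappa [beta x, beta y] + mu beta[x,y], and both summands have vanishing cyclic
   sums by the invariance resp. equivalence properties of beta combined with its
   antisymmetry (which holds outright once nu <> 0).  Antisymmetry also shows that the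
   bracket built from r+ and r- coincides with [,]_r, giving (i).
   Part (ii) is a direct computation: for rho = r + eps beta with eps^2 = 1 and beta
   g-equivariant, the defect [rho x, rho y] - rho [x,y]_r equals
   Phi(x,y) + [beta x, beta y] - eps lam beta[x,y]; take eps = 1 resp. eps = -1. *)

lemmas bilinear_rules = bilinear_ladd bilinear_radd bilinear_lsub bilinear_rsub
  bilinear_lneg bilinear_rneg bilinear_lmul bilinear_rmul bilinear_lzero bilinear_rzero

lemma alternating_antisym:
  fixes br :: "'a::real_vector \<Rightarrow> 'a \<Rightarrow> 'b::real_vector"
  assumes bil: "bilinear br" and alt: "\<And>x. br x x = 0"
  shows "br a b = - br b a"
proof -
  have "br (a + b) (a + b) = br a b + br b a"
    by (simp add: bilinear_ladd[OF bil] bilinear_radd[OF bil] alt[of a] alt[of b])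
  then have "br a b + br b a = 0" by (simp only: alt)
  then show ?thesis by (metis eq_neg_iff_add_eq_0)
qed

lemma lie_bracket_antisym: "lie_bracket br \<Longrightarrow> br a b = - br b a"
  unfolding lie_bracket_def by (blast intro: alternating_antisym)

lemma jacobi_left_iff_right:
  fixes br :: "'a \<Rightarrow> 'a \<Rightarrow> 'a::ab_group_add"
  assumes antisym: "\<And>a b. br a b = - br b a"
  shows "br (br x y) z + br (br y z) x + br (br z x) y = 0
     \<longleftrightarrow> br x (br y z) + br y (br z x) + br z (br x y) = 0"
proof -
  have "br x (br y z) + br y (br z x) + br z (br x y)
      = - (br (br x y) z + br (br y z) x + br (br z x) y)"
    by (simp add: antisym[of x "br y z"] antisym[of y "br z x"] antisym[of z "br x y"])
  then show ?thesis by (metis neg_equal_0_iff_equal)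
qed

definition rota_bracket ::
  "('g \<Rightarrow> 'k \<Rightarrow> 'k) \<Rightarrow> ('k::real_vector \<Rightarrow> 'k \<Rightarrow> 'k) \<Rightarrow> real \<Rightarrow> ('k \<Rightarrow> 'g) \<Rightarrow> 'k \<Rightarrow> 'k \<Rightarrow> 'k"
  where "rota_bracket \<pi> kbr lam r x y = \<pi> (r x) y - \<pi> (r y) x + lam *\<^sub>R kbr x y"

lemma antisym_mass_nonzero:
  assumes "antisym_mass \<pi> \<beta> \<nu>" and "\<nu> \<noteq> 0"
  shows "\<pi> (\<beta> x) y = - \<pi> (\<beta> y) x"
  using assms unfolding antisym_mass_def by (metis add_eq_0_iff scaleR_eq_0_iff)

context
  fixes gbr :: "'g::real_vector \<Rightarrow> 'g \<Rightarrow> 'g"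
    and kbr :: "'k::real_vector \<Rightarrow> 'k \<Rightarrow> 'k"
    and \<pi> :: "'g \<Rightarrow> 'k \<Rightarrow> 'k"
  assumes gl: "g_lie_algebra gbr kbr \<pi>"
begin

lemma action_bilinear: "bilinear \<pi>"
  using gl unfolding g_lie_algebra_def derivation_def bilinear_def by blast

lemma action_derivation: "\<pi> \<xi> (kbr x y) = kbr (\<pi> \<xi> x) y + kbr x (\<pi> \<xi> y)"
  using gl unfolding g_lie_algebra_def derivation_def by blast

lemma action_hom: "\<pi> (gbr \<xi> \<eta>) x = \<pi> \<xi> (\<pi> \<eta> x) - \<pi> \<eta> (\<pi> \<xi> x)"
  using gl unfolding g_lie_algebra_def by blast

lemma kbr_lie: "lie_bracket kbr"
  using gl unfolding g_lie_algebra_def by blast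

lemma kbr_bilinear: "bilinear kbr"
  using kbr_lie unfolding lie_bracket_def by blast

lemma kbr_jacobi_left: "kbr (kbr x y) z + kbr (kbr y z) x + kbr (kbr z x) y = 0"
  using kbr_lie jacobi_left_iff_right[where br = kbr, OF lie_bracket_antisym[OF kbr_lie]]
  unfolding lie_bracket_def by blast

lemma rota_bracket_bilinear: "linear r \<Longrightarrow> bilinear (rota_bracket \<pi> kbr lam r)"
  unfolding bilinear_def rota_bracket_def
  by (auto intro!: linearI simp: linear_add linear_cmul bilinear_rules[OF action_bilinear]
      bilinear_rules[OF kbr_bilinear] algebra_simps)

lemma rota_bracket_alternating: "rota_bracket \<pi> kbr lam r x x = 0"
  using kbr_lie unfolding rota_bracket_def lie_bracket_def by simp

lemma rota_jacobiator:
  fixes r :: "'k \<Rightarrow> 'g" and lam :: real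
  defines "B \<equiv> rota_bracket \<pi> kbr lam r"
    and "\<Phi> \<equiv> \<lambda>x y. gbr (r x) (r y) - r (rota_bracket \<pi> kbr lam r x y)"
  shows "B (B x y) z + B (B y z) x + B (B z x) y
       = - (\<pi> (\<Phi> x y) z + \<pi> (\<Phi> y z) x + \<pi> (\<Phi> z x) y)"
proof -
  have B_app: "B u v = \<pi> (r u) v - \<pi> (r v) u + lam *\<^sub>R kbr u v" for u v
    by (simp add: B_def rota_bracket_def)
  have r_B: "r (B a b) = gbr (r a) (r b) - \<Phi> a b" for a b
    by (simp add: \<Phi>_def B_def)
  have expand: "B (B a b) c = \<pi> (r a) (\<pi> (r b) c) - \<pi> (r b) (\<pi> (r a) c) - \<pi> (\<Phi> a b) c
      - \<pi> (r c) (\<pi> (r a) b) + \<pi> (r c) (\<pi> (r b) a)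
      - lam *\<^sub>R kbr (\<pi> (r c) a) b + lam *\<^sub>R kbr (\<pi> (r c) b) a
      + lam *\<^sub>R kbr (\<pi> (r a) b) c - lam *\<^sub>R kbr (\<pi> (r b) a) c
      + (lam * lam) *\<^sub>R kbr (kbr a b) c" for a b c
  proof -
    have "B (B a b) c = \<pi> (r (B a b)) c - \<pi> (r c) (B a b) + lam *\<^sub>R kbr (B a b) c"
      by (rule B_app)
    also have "\<dots> = \<pi> (gbr (r a) (r b) - \<Phi> a b) c - \<pi> (r c) (B a b) + lam *\<^sub>R kbr (B a b) c"
      by (simp only: r_B)
    finally show ?thesis
      unfolding B_app[of a b] using lie_bracket_antisym[OF kbr_lie, of a "\<pi> (r c) b"]
      by (simp add: bilinear_rules[OF action_bilinear] bilinear_rules[OF kbr_bilinear]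
          action_hom action_derivation algebra_simps)
  qed
  show ?thesis
    unfolding expand using kbr_jacobi_left[of x y z]
    by (simp add: algebra_simps flip: scaleR_add_right)
qed

(* The kappa-part of the curvature acts with vanishing cyclic sum: with
   T(a,b,c) = beta(a).(beta(b).c) and U its cyclic sum, the representation property
   gives 2 kappa U and invariance gives -kappa U for the same quantity. *)
lemma invariant_mass_cyclic:
  assumes anti: "\<And>x y. \<pi> (\<beta> x) y = - \<pi> (\<beta> y) x"
    and inv: "invariant_mass gbr \<pi> \<beta> \<kappa>"
  shows "\<kappa> *\<^sub>R (\<pi> (gbr (\<beta> x) (\<beta> y)) z + \<pi> (gbr (\<beta> y) (\<beta> z)) x
           + \<pi> (gbr (\<beta> z) (\<beta> x)) y) = 0"
proof -
  define T where "T a b c = \<pi> (\<beta> a) (\<pi> (\<beta> b) c)" for a b c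
  define U where "U = T x y z + T y z x + T z x y"
  have by_hom: "\<pi> (gbr (\<beta> a) (\<beta> b)) c = T a b c + T b c a" for a b c
    unfolding T_def action_hom using anti[of a c]
    by (simp add: bilinear_rneg[OF action_bilinear])
  have by_inv: "\<kappa> *\<^sub>R \<pi> (gbr (\<beta> a) (\<beta> b)) c = - \<kappa> *\<^sub>R T c a b" for a b c
  proof -
    have "\<kappa> *\<^sub>R \<pi> (gbr (\<beta> a) (\<beta> b)) c = \<pi> (\<kappa> *\<^sub>R gbr (\<beta> a) (\<beta> b)) c"
      by (simp add: bilinear_lmul[OF action_bilinear])
    also have "\<dots> = \<pi> (\<kappa> *\<^sub>R \<beta> (\<pi> (\<beta> a) b)) c"
      using inv unfolding invariant_mass_def by metis
    also have "\<dots> = - \<kappa> *\<^sub>R T c a b"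
      unfolding T_def using anti[of "\<pi> (\<beta> a) b" c]
      by (simp add: bilinear_lmul[OF action_bilinear])
    finally show ?thesis .
  qed
  let ?S = "\<kappa> *\<^sub>R (\<pi> (gbr (\<beta> x) (\<beta> y)) z + \<pi> (gbr (\<beta> y) (\<beta> z)) x
           + \<pi> (gbr (\<beta> z) (\<beta> x)) y)"
  have twice: "?S = \<kappa> *\<^sub>R U + \<kappa> *\<^sub>R U"
    unfolding by_hom U_def by (simp add: algebra_simps)
  have opposite: "?S = - (\<kappa> *\<^sub>R U)"
    unfolding scaleR_right_distrib by_inv U_def by (simp add: algebra_simps)
  from twice opposite have "\<kappa> *\<^sub>R U + \<kappa> *\<^sub>R U + \<kappa> *\<^sub>R U = 0"
    by (metis eq_neg_iff_add_eq_0)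
  then have "(\<kappa> + \<kappa> + \<kappa>) *\<^sub>R U = 0"
    by (simp only: scaleR_left_distrib)
  then have "\<kappa> *\<^sub>R U = 0" by simp
  then show ?thesis using twice by (simp only: add_0_right)
qed

(* The mu-part of the curvature acts with vanishing cyclic sum, by the equivalence
   property and the derivation property of beta(z). *)
lemma equiv_mass_cyclic:
  assumes anti: "\<And>x y. \<pi> (\<beta> x) y = - \<pi> (\<beta> y) x"
    and eqm: "equiv_mass kbr \<pi> \<beta> \<mu>"
  shows "\<mu> *\<^sub>R (\<pi> (\<beta> (kbr x y)) z + \<pi> (\<beta> (kbr y z)) x + \<pi> (\<beta> (kbr z x)) y) = 0"
proof -
  define Q where "Q a b c = \<mu> *\<^sub>R kbr (\<pi> (\<beta> a) b) c" for a b c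
  have Q_eq: "\<mu> *\<^sub>R \<pi> (\<beta> (kbr a b)) c = Q a b c" for a b c
    using eqm unfolding equiv_mass_def Q_def by blast
  have by_derivation: "\<mu> *\<^sub>R \<pi> (\<beta> (kbr a b)) c = - Q c a b - Q b c a" for a b c
  proof -
    have "\<pi> (\<beta> (kbr a b)) c = - kbr (\<pi> (\<beta> c) a) b - kbr (\<pi> (\<beta> b) c) a"
      using anti[of "kbr a b" c] action_derivation[of "\<beta> c" a b] anti[of c b]
        lie_bracket_antisym[OF kbr_lie, of a "\<pi> (\<beta> b) c"]
      by (simp add: bilinear_rneg[OF action_bilinear] bilinear_rneg[OF kbr_bilinear])
    then have "\<mu> *\<^sub>R \<pi> (\<beta> (kbr a b)) c
        = \<mu> *\<^sub>R (- kbr (\<pi> (\<beta> c) a) b - kbr (\<pi> (\<beta> b) c) a)" by simp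
    then show ?thesis unfolding Q_def by (simp add: scaleR_right_diff_distrib)
  qed
  have "\<mu> *\<^sub>R \<pi> (\<beta> (kbr x y)) z + (Q z x y + Q y z x) = 0"
    using by_derivation[of x y z] by simp
  then show ?thesis unfolding scaleR_right_distrib Q_eq by (simp add: algebra_simps)
qed

theorem ext_O_operator_lie:
  assumes O: "ext_O_operator gbr kbr \<pi> lam r \<beta> \<nu> \<kappa> \<mu>" and nu: "\<nu> \<noteq> 0"
  shows "lie_bracket (rota_bracket \<pi> kbr lam r)"
proof -
  let ?B = "rota_bracket \<pi> kbr lam r"
  have anti: "\<And>x y. \<pi> (\<beta> x) y = - \<pi> (\<beta> y) x"
    using O nu antisym_mass_nonzero unfolding ext_O_operator_def by blast
  have bil: "bilinear ?B"
    using O rota_bracket_bilinear unfolding ext_O_operator_def by blast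
  have curvature: "gbr (r x) (r y) - r (?B x y) = \<kappa> *\<^sub>R gbr (\<beta> x) (\<beta> y) + \<mu> *\<^sub>R \<beta> (kbr x y)"
    for x y using O unfolding ext_O_operator_def rota_bracket_def by blast
  have "?B (?B x y) z + ?B (?B y z) x + ?B (?B z x) y = 0" for x y z
    unfolding rota_jacobiator curvature
    using invariant_mass_cyclic[OF anti, of \<kappa> x y z] equiv_mass_cyclic[OF anti, of \<mu> x y z] O
    by (simp add: bilinear_rules[OF action_bilinear] ext_O_operator_def algebra_simps)
  then have "?B x (?B y z) + ?B y (?B z x) + ?B z (?B x y) = 0" for x y z
    using jacobi_left_iff_right[where br = ?B, OF alternating_antisym[OF bil rota_bracket_alternating]]
    by blast
  then show ?thesis
    unfolding lie_bracket_def using bil rota_bracket_alternating by blast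
qed

lemma twisted_bracket_eq_rota:
  assumes anti: "\<And>x y. \<pi> (\<beta> x) y = - \<pi> (\<beta> y) x"
  shows "\<pi> (r x + \<beta> x) y - \<pi> (r y - \<beta> y) x + lam *\<^sub>R kbr x y = rota_bracket \<pi> kbr lam r x y"
  unfolding rota_bracket_def using anti[of x y]
  by (simp add: bilinear_ladd[OF action_bilinear] bilinear_lsub[OF action_bilinear])

end

lemma shifted_hom_iff:
  fixes gbr :: "'g::real_vector \<Rightarrow> 'g \<Rightarrow> 'g"
    and kbr :: "'k::real_vector \<Rightarrow> 'k \<Rightarrow> 'k"
    and \<pi> :: "'g \<Rightarrow> 'k \<Rightarrow> 'k"
    and r \<beta> \<rho> :: "'k \<Rightarrow> 'g"
    and \<epsilon> lam :: real
  assumes gbr_lie: "lie_bracket gbr" and lin: "linear \<beta>"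
    and equivariant: "\<And>\<xi> x. \<beta> (\<pi> \<xi> x) = gbr \<xi> (\<beta> x)"
    and \<rho>: "\<And>x. \<rho> x = r x + \<epsilon> *\<^sub>R \<beta> x" and sign: "\<epsilon> * \<epsilon> = 1"
  shows "gbr (\<rho> x) (\<rho> y) = \<rho> (rota_bracket \<pi> kbr lam r x y)
     \<longleftrightarrow> gbr (r x) (r y) - r (rota_bracket \<pi> kbr lam r x y)
         = - gbr (\<beta> x) (\<beta> y) + (\<epsilon> * lam) *\<^sub>R \<beta> (kbr x y)"
proof -
  let ?W = "rota_bracket \<pi> kbr lam r x y"
  have bil: "bilinear gbr" using gbr_lie unfolding lie_bracket_def by blast
  have beta_W: "\<beta> ?W = gbr (r x) (\<beta> y) + gbr (\<beta> x) (r y) + lam *\<^sub>R \<beta> (kbr x y)"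
    unfolding rota_bracket_def using lie_bracket_antisym[OF gbr_lie, of "r y" "\<beta> x"]
    by (simp add: linear_add[OF lin] linear_diff[OF lin] linear_cmul[OF lin] equivariant)
  have defect: "gbr (\<rho> x) (\<rho> y) - \<rho> ?W
      = (gbr (r x) (r y) - r ?W) + gbr (\<beta> x) (\<beta> y) - (\<epsilon> * lam) *\<^sub>R \<beta> (kbr x y)"
    unfolding \<rho> beta_W by (simp add: bilinear_rules[OF bil] sign algebra_simps)
  show ?thesis
    unfolding eq_iff_diff_eq_0[of "gbr (\<rho> x) (\<rho> y)"] defect
    by (auto simp: algebra_simps)
qed

theorem theorem2p13:
  fixes gbr :: "'g::euclidean_space \<Rightarrow> 'g \<Rightarrow> 'g"
    and kbr :: "'k::euclidean_space \<Rightarrow> 'k \<Rightarrow> 'k"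
    and \<pi> :: "'g \<Rightarrow> 'k \<Rightarrow> 'k"
    and rp rm r \<beta> :: "'k \<Rightarrow> 'g"
    and lam \<nu> \<kappa> \<mu> :: real
  assumes "lie_bracket gbr"
    and "g_lie_algebra gbr kbr \<pi>"
    and "linear rp" and "linear rm"
    and "r = (\<lambda>x. (1/2) *\<^sub>R (rp x + rm x))"
    and "\<beta> = (\<lambda>x. (1/2) *\<^sub>R (rp x - rm x))"
  shows "(ext_O_operator gbr kbr \<pi> lam r \<beta> \<nu> \<kappa> \<mu> \<and> \<nu> \<noteq> 0 \<longrightarrow>
            lie_bracket (\<lambda>x y. \<pi> (rp x) y - \<pi> (rm y) x + lam *\<^sub>R kbr x y))
       \<and> ((\<forall>\<xi> x. \<beta> (\<pi> \<xi> x) = gbr \<xi> (\<beta> x)) \<longrightarrow>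
            ((\<forall>x y. gbr (r x) (r y) - r (\<pi> (r x) y - \<pi> (r y) x + lam *\<^sub>R kbr x y)
                    = - gbr (\<beta> x) (\<beta> y) + lam *\<^sub>R \<beta> (kbr x y))
             \<longleftrightarrow> (\<forall>x y. gbr (rp x) (rp y) = rp (\<pi> (r x) y - \<pi> (r y) x + lam *\<^sub>R kbr x y)))
          \<and> ((\<forall>x y. gbr (r x) (r y) - r (\<pi> (r x) y - \<pi> (r y) x + lam *\<^sub>R kbr x y)
                    = - gbr (\<beta> x) (\<beta> y) - lam *\<^sub>R \<beta> (kbr x y))
             \<longleftrightarrow> (\<forall>x y. gbr (rm x) (rm y) = rm (\<pi> (r x) y - \<pi> (r y) x + lam *\<^sub>R kbr x y))))"
proof -
  have rp_split: "rp = (\<lambda>x. r x + \<beta> x)" and rm_split: "rm = (\<lambda>x. r x - \<beta> x)"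
    unfolding assms(5,6)
    by (auto simp: algebra_simps simp flip: scaleR_add_right scaleR_diff_right)
  have lin_beta: "linear \<beta>" unfolding assms(6)
    by (rule linearI) (simp_all add: linear_add[OF assms(3)] linear_add[OF assms(4)]
        linear_cmul[OF assms(3)] linear_cmul[OF assms(4)] algebra_simps)
  have part_i: "lie_bracket (\<lambda>x y. \<pi> (rp x) y - \<pi> (rm y) x + lam *\<^sub>R kbr x y)"
    if O: "ext_O_operator gbr kbr \<pi> lam r \<beta> \<nu> \<kappa> \<mu>" and nu: "\<nu> \<noteq> 0"
  proof -
    have anti: "\<And>x y. \<pi> (\<beta> x) y = - \<pi> (\<beta> y) x"
      using O nu antisym_mass_nonzero unfolding ext_O_operator_def by blast
    show ?thesis
      unfolding rp_split rm_split twisted_bracket_eq_rota[OF assms(2) anti]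
      by (rule ext_O_operator_lie[OF assms(2) O nu])
  qed
  have part_ii:
    "(gbr (r x) (r y) - r (\<pi> (r x) y - \<pi> (r y) x + lam *\<^sub>R kbr x y)
        = - gbr (\<beta> x) (\<beta> y) + (\<epsilon> * lam) *\<^sub>R \<beta> (kbr x y))
     \<longleftrightarrow> gbr (\<rho> x) (\<rho> y) = \<rho> (\<pi> (r x) y - \<pi> (r y) x + lam *\<^sub>R kbr x y)"
    if equivariant: "\<forall>\<xi> x. \<beta> (\<pi> \<xi> x) = gbr \<xi> (\<beta> x)"
      and \<rho>: "\<rho> = (\<lambda>x. r x + \<epsilon> *\<^sub>R \<beta> x)" and sign: "\<epsilon> * \<epsilon> = 1" for x y \<rho> \<epsilon>
    using shifted_hom_iff[OF assms(1) lin_beta _ _ sign, of \<pi> \<rho> r x y kbr lam] equivariant \<rho>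
    unfolding rota_bracket_def by auto
  show ?thesis
    using part_i part_ii[where \<epsilon> = 1] part_ii[where \<epsilon> = "-1"] rp_split rm_split
    by auto
qed

end
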